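(* Let $K$ be a spherically complete non-Archimedean field with value group $|K^\times|=\mathbb{R}_{>0}$. Then every almost finite free $K^{\circ,a}$-module is isomorphic, in the category of almost $K^{\circ}$-modules, to a finite direct sum of copies of $K^{\circ,a}$.
   Context: A non-Archimedean field is a field complete for a nontrivial rank-one non-Archimedean absolute value; it is spherically complete if every decreasing sequence of closed balls has nonempty intersection. $K^\circ=\{x:|x|\le1\}$ and $K^{\circ\circ}=\{x:|x|<1\}$. Almost mathematics is relative to $(K^\circ,K^{\circ\circ})$: the category of almost $K^\circ$-modules is the Serre quotient of $K^\circ$-modules by the modules annihilated by $K^{\circ\circ}$, and $K^{\circ,a}$ is the image of $K^\circ$. An almost $K^{\circ,a}$-module $M$ is almost finite free of rank $r$ if for every finitely generated ideal $I_0\subseteq K^{\circ\circ}$ there is a morphism $(K^{\circ,a})^r\to M$ whose kernel and cokernel are annihilated by $I_0$. *)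

theory Defs
  imports Complex_Main "HOL-Algebra.Module" "HOL-Algebra.Ideal"
begin

definition nonarch_abs :: "('k::field \<Rightarrow> real) \<Rightarrow> bool" where
  "nonarch_abs v \<longleftrightarrow>
     (\<forall>x. v x \<ge> 0) \<and> (\<forall>x. v x = 0 \<longleftrightarrow> x = 0) \<and>
     (\<forall>x y. v (x * y) = v x * v y) \<and>
     (\<forall>x y. v (x + y) \<le> max (v x) (v y))"

definition nontrivial_abs :: "('k::field \<Rightarrow> real) \<Rightarrow> bool" where
  "nontrivial_abs v \<longleftrightarrow> (\<exists>x. x \<noteq> 0 \<and> v x \<noteq> 1)"

definition complete_abs :: "('k::field \<Rightarrow> real) \<Rightarrow> bool" where
  "complete_abs v \<longleftrightarrow>
     (\<forall>s :: nat \<Rightarrow> 'k.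
        (\<forall>e>0. \<exists>N. \<forall>m\<ge>N. \<forall>n\<ge>N. v (s m - s n) < e) \<longrightarrow>
        (\<exists>l. \<forall>e>0. \<exists>N. \<forall>n\<ge>N. v (s n - l) < e))"

definition nonarch_field :: "('k::field \<Rightarrow> real) \<Rightarrow> bool" where
  "nonarch_field v \<longleftrightarrow> nonarch_abs v \<and> nontrivial_abs v \<and> complete_abs v"

definition cball_v :: "('k::field \<Rightarrow> real) \<Rightarrow> 'k \<Rightarrow> real \<Rightarrow> 'k set" where
  "cball_v v c r = {x. v (x - c) \<le> r}"

definition spherically_complete :: "('k::field \<Rightarrow> real) \<Rightarrow> bool" where
  "spherically_complete v \<longleftrightarrow>
     (\<forall>(c :: nat \<Rightarrow> 'k) (r :: nat \<Rightarrow> real).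
        (\<forall>n. r n > 0) \<longrightarrow>
        (\<forall>n. cball_v v (c (Suc n)) (r (Suc n)) \<subseteq> cball_v v (c n) (r n)) \<longrightarrow>
        (\<Inter>n. cball_v v (c n) (r n)) \<noteq> {})"

definition value_group :: "('k::field \<Rightarrow> real) \<Rightarrow> real set" where
  "value_group v = v ` (UNIV - {0})"

definition Kint :: "('k::field \<Rightarrow> real) \<Rightarrow> 'k ring" where
  "Kint v = \<lparr>carrier = {x. v x \<le> 1}, mult = (*), one = 1, zero = 0, add = (+)\<rparr>"

definition Kmax :: "('k::field \<Rightarrow> real) \<Rightarrow> 'k set" where
  "Kmax v = {x. v x < 1}"

text \<open>The free K^o-module (K^o)^r, realised as functions nat => 'k
  with values in K^o, vanishing from index r on.\<close>
definition Kfree :: "('k::field \<Rightarrow> real) \<Rightarrow> nat \<Rightarrow> ('k, nat \<Rightarrow> 'k) module" where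
  "Kfree v r = \<lparr>carrier = {f. (\<forall>i. v (f i) \<le> 1) \<and> (\<forall>i\<ge>r. f i = 0)},
     mult = (\<lambda>f g i. f i * g i), one = (\<lambda>i. 1), zero = (\<lambda>i. 0),
     add = (\<lambda>f g i. f i + g i), smult = (\<lambda>a f i. a * f i)\<rparr>"

text \<open>For sets Y \<subseteq> X of a K^o-module M: the subquotient X/Y is almost zero,
  i.e. annihilated by K^oo.\<close>
definition almost_zero_sq :: "('k::field \<Rightarrow> real) \<Rightarrow> ('k, 'm, 'c) module_scheme \<Rightarrow> 'm set \<Rightarrow> 'm set \<Rightarrow> bool" where
  "almost_zero_sq v M X Y \<longleftrightarrow> (\<forall>d\<in>Kmax v. \<forall>x\<in>X. d \<odot>\<^bsub>M\<^esub> x \<in> Y)"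

text \<open>The almost module (X/Y)^a is annihilated by the ideal I (I (X/Y) is almost zero).\<close>
definition almost_annihilated :: "('k::field \<Rightarrow> real) \<Rightarrow> ('k, 'm, 'c) module_scheme \<Rightarrow> 'k set \<Rightarrow> 'm set \<Rightarrow> 'm set \<Rightarrow> bool" where
  "almost_annihilated v M I X Y \<longleftrightarrow> (\<forall>e\<in>I. almost_zero_sq v M ((\<lambda>x. e \<odot>\<^bsub>M\<^esub> x) ` X) Y)"

text \<open>A morphism A^a -> B^a in the Serre quotient category (almost K^o-modules)
  is represented (Gabriel's description of Hom in a Serre quotient) by a submodule
  A' of A with A/A' almost zero, a submodule B' of B that is almost zero, and a
  K^o-linear map A' -> B/B'; the latter is given by a map g : A' -> B that is
  linear modulo B'.\<close>
definition almost_roof ::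
  "('k::field \<Rightarrow> real) \<Rightarrow> ('k, 'a, 'c) module_scheme \<Rightarrow> ('k, 'b, 'd) module_scheme \<Rightarrow>
   'a set \<Rightarrow> 'b set \<Rightarrow> ('a \<Rightarrow> 'b) \<Rightarrow> bool" where
  "almost_roof v A B A' B' g \<longleftrightarrow>
     submodule A' (Kint v) A \<and> almost_zero_sq v A (carrier A) A' \<and>
     submodule B' (Kint v) B \<and> almost_zero_sq v B B' {\<zero>\<^bsub>B\<^esub>} \<and>
     g \<in> A' \<rightarrow> carrier B \<and>
     (\<forall>x\<in>A'. \<forall>y\<in>A'. g (x \<oplus>\<^bsub>A\<^esub> y) \<ominus>\<^bsub>B\<^esub> (g x \<oplus>\<^bsub>B\<^esub> g y) \<in> B') \<and>
     (\<forall>a\<in>carrier (Kint v). \<forall>x\<in>A'. g (a \<odot>\<^bsub>A\<^esub> x) \<ominus>\<^bsub>B\<^esub> (a \<odot>\<^bsub>B\<^esub> g x) \<in> B')"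

text \<open>Kernel of the represented morphism (a submodule of A') and its image
  (a submodule of B containing B'); the cokernel is B / roof_image.\<close>
definition roof_kernel :: "('k, 'b, 'd) module_scheme \<Rightarrow> 'a set \<Rightarrow> 'b set \<Rightarrow> ('a \<Rightarrow> 'b) \<Rightarrow> 'a set" where
  "roof_kernel B A' B' g = {x\<in>A'. g x \<in> B'}"

definition roof_image :: "('k, 'b, 'd) module_scheme \<Rightarrow> 'a set \<Rightarrow> 'b set \<Rightarrow> ('a \<Rightarrow> 'b) \<Rightarrow> 'b set" where
  "roof_image B A' B' g = {y\<in>carrier B. \<exists>x\<in>A'. y \<ominus>\<^bsub>B\<^esub> g x \<in> B'}"

definition almost_finite_free :: "('k::field \<Rightarrow> real) \<Rightarrow> ('k, 'm, 'c) module_scheme \<Rightarrow> nat \<Rightarrow> bool" where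
  "almost_finite_free v M r \<longleftrightarrow>
     (\<forall>S. finite S \<and> S \<subseteq> Kmax v \<longrightarrow>
        (\<exists>A' B' g. almost_roof v (Kfree v r) M A' B' g \<and>
           almost_annihilated v (Kfree v r) (genideal (Kint v) S)
              (roof_kernel M A' B' g) {\<zero>\<^bsub>Kfree v r\<^esub>} \<and>
           almost_annihilated v M (genideal (Kint v) S)
              (carrier M) (roof_image M A' B' g)))"

definition almost_isomorphic :: "('k::field \<Rightarrow> real) \<Rightarrow> ('k, 'a, 'c) module_scheme \<Rightarrow> ('k, 'b, 'd) module_scheme \<Rightarrow> bool" where
  "almost_isomorphic v A B \<longleftrightarrow>
     (\<exists>A' B' g. almost_roof v A B A' B' g \<and>
        almost_zero_sq v A (roof_kernel B A' B' g) {\<zero>\<^bsub>A\<^esub>} \<and>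
        almost_zero_sq v B (carrier B) (roof_image B A' B' g))"

end

theory Submission
  imports Defs
begin

text \<open>Applying almost finite freeness to a single \<open>\<epsilon> \<in> K\<^sup>\<circ>\<^sup>\<circ>\<close> gives a roof
  \<open>g\<close> from \<open>(K\<^sup>\<circ>)\<^sup>r\<close> to \<open>M\<close>, with error term \<open>B'\<close>, whose kernel is zero and whose cokernel
  is killed by \<open>\<epsilon> K\<^sup>\<circ>\<^sup>\<circ>\<close>. Inverting it up to the scalar \<open>\<kappa> = \<epsilon>\<^sup>2\<close> gives a
  \<open>K\<^sup>\<circ>\<close>-linear map \<open>\<psi> : M \<rightarrow> (K\<^sup>\<circ>)\<^sup>r\<close>: \<open>\<psi> y\<close> is the unique \<open>x\<close> with
  \<open>\<kappa> y \<equiv> g x\<close> modulo \<open>B'\<close>. Its image \<open>L\<close> is a lattice, and its kernel is almost zero,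
  because \<open>M\<close> has no almost-torsion: if \<open>\<kappa> z\<close> is almost zero then so is \<open>z\<close>, as one sees by
  writing \<open>d \<in> K\<^sup>\<circ>\<^sup>\<circ>\<close> as \<open>d' e\<^sup>2\<close> and using the roof for \<open>e\<close>.
  Hence \<open>M\<^sup>a \<cong> L\<^sup>a\<close>, and it remains to find an almost basis of \<open>L\<close>.

  This goes by induction on \<open>r\<close>: an almost basis of the slice \<open>{x \<in> L. x\<^sub>r = 0}\<close> is
  extended by a pivot \<open>w\<close> with \<open>|w\<^sub>r| = s = sup {|y\<^sub>r| : y \<in> L}\<close>, which is possible as
  \<open>s\<close> lies in the value group. If the supremum is not attained, one takes approximate pivots
  \<open>p\<^sub>n\<close> with \<open>c p\<^sub>n \<in> L\<close> for \<open>|c| \<le> t\<^sub>n\<close>, where \<open>t\<^sub>n \<nearrow> 1\<close>; the slice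
  coordinates of \<open>p\<^sub>n - p\<^sub>0\<close> move by at most \<open>1/t\<^sub>n\<close>, and subtracting a
  pseudo-limit of them, which exists by spherical completeness, turns \<open>p\<^sub>0\<close> into a pivot.\<close>

section \<open>Non-Archimedean absolute values\<close>

lemma Kint_simps [simp]:
  "carrier (Kint v) = {x. v x \<le> 1}" "x \<otimes>\<^bsub>Kint v\<^esub> y = x * y" "x \<oplus>\<^bsub>Kint v\<^esub> y = x + y"
  "\<one>\<^bsub>Kint v\<^esub> = 1" "\<zero>\<^bsub>Kint v\<^esub> = 0"
  by (simp_all add: Kint_def)

lemma Kfree_simps [simp]:
  "carrier (Kfree v n) = {f. (\<forall>i. v (f i) \<le> 1) \<and> (\<forall>i\<ge>n. f i = 0)}"
  "f \<oplus>\<^bsub>Kfree v n\<^esub> g = (\<lambda>i. f i + g i)" "a \<odot>\<^bsub>Kfree v n\<^esub> f = (\<lambda>i. a * f i)"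
  "\<zero>\<^bsub>Kfree v n\<^esub> = (\<lambda>i. 0)"
  by (simp_all add: Kfree_def)

locale nonarch_valued =
  fixes v :: "'k::field \<Rightarrow> real"
  assumes nonarch: "nonarch_abs v"
begin

lemma v_nonneg [simp]: "v x \<ge> 0"
  using nonarch unfolding nonarch_abs_def by auto

lemma v_eq_0_iff [simp]: "v x = 0 \<longleftrightarrow> x = 0"
  using nonarch unfolding nonarch_abs_def by auto

lemma v_zero [simp]: "v 0 = 0"
  by simp

lemma v_pos_iff [simp]: "v x > 0 \<longleftrightarrow> x \<noteq> 0"
  using v_nonneg[of x] v_eq_0_iff[of x] by linarith

lemma v_mult [simp]: "v (x * y) = v x * v y"
  using nonarch unfolding nonarch_abs_def by auto

lemma v_add_le: "v (x + y) \<le> max (v x) (v y)"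
  using nonarch unfolding nonarch_abs_def by auto

lemma v_one [simp]: "v 1 = 1"
  using v_mult[of 1 1] v_eq_0_iff[of 1] by (metis mult_cancel_right1 one_neq_zero)

lemma v_minus [simp]: "v (- x) = v x"
proof -
  have "v (-1) * v (-1) = 1"
    using v_mult[of "-1" "-1"] by simp
  then have "v (-1) = 1"
    using v_nonneg[of "-1"] by (metis abs_of_nonneg abs_square_eq_1 power2_eq_square)
  then show ?thesis
    using v_mult[of "-1" x] by simp
qed

lemma v_diff_le: "v (x - y) \<le> max (v x) (v y)"
  using v_add_le[of x "- y"] by simp

lemma v_diff_triangle: "v (x - z) \<le> max (v (x - y)) (v (y - z))"
  using v_add_le[of "x - y" "y - z"] by simp

lemma v_inverse [simp]: "v (inverse x) = inverse (v x)"
proof (cases "x = 0")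
  case False
  then have "v (inverse x) * v x = 1"
    using v_mult[of "inverse x" x] by simp
  then show ?thesis
    using inverse_unique[of "v x" "v (inverse x)"] by (simp add: mult.commute)
qed simp

lemma v_divide [simp]: "v (x / y) = v x / v y"
  by (simp add: divide_inverse)

lemma v_add_le_1: "v x \<le> 1 \<Longrightarrow> v y \<le> 1 \<Longrightarrow> v (x + y) \<le> 1"
  using v_add_le[of x y] by simp

lemma v_add_less_1: "v x < 1 \<Longrightarrow> v y < 1 \<Longrightarrow> v (x + y) < 1"
  using v_add_le[of x y] by simp

lemma v_mult_less_1: "v x < 1 \<Longrightarrow> v y \<le> 1 \<Longrightarrow> v x * v y < 1"
  using mult_left_mono[of "v y" 1 "v x"] by simp

lemma v_mult_less_1_of_le_inverse:
  assumes "v x < t" "v y \<le> 1 / t"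
  shows "v (x * y) < 1"
proof -
  have "t > 0"
    using assms(1) v_nonneg[of x] by linarith
  have "v (x * y) \<le> v x * (1 / t)"
    using mult_left_mono[OF assms(2) v_nonneg[of x]] by simp
  also have "\<dots> < 1"
    using assms(1) \<open>t > 0\<close> by (simp add: divide_less_eq)
  finally show ?thesis .
qed

lemma Kint_cring: "cring (Kint v)"
proof (rule cringI)
  show "abelian_group (Kint v)"
  proof (rule abelian_groupI)
    fix x assume "x \<in> carrier (Kint v)"
    then show "\<exists>y\<in>carrier (Kint v). y \<oplus>\<^bsub>Kint v\<^esub> x = \<zero>\<^bsub>Kint v\<^esub>"
      by (intro bexI[of _ "- x"]) auto
  qed (auto simp: v_add_le_1 add.assoc add.commute)
  show "comm_monoid (Kint v)"
    by (rule comm_monoidI) (auto simp: mult.assoc mult.commute intro: mult_le_one)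
qed (auto simp: distrib_right)

lemma Kfree_abelian_group: "abelian_group (Kfree v n)"
proof (rule abelian_groupI)
  fix x assume "x \<in> carrier (Kfree v n)"
  then show "\<exists>y\<in>carrier (Kfree v n). y \<oplus>\<^bsub>Kfree v n\<^esub> x = \<zero>\<^bsub>Kfree v n\<^esub>"
    by (intro bexI[of _ "\<lambda>i. - x i"]) auto
qed (auto simp: v_add_le_1 add.assoc add.commute)

lemma Kfree_module: "module (Kint v) (Kfree v n)"
proof (rule moduleI[OF Kint_cring Kfree_abelian_group])
  fix a x assume "a \<in> carrier (Kint v)" "x \<in> carrier (Kfree v n)"
  then show "a \<odot>\<^bsub>Kfree v n\<^esub> x \<in> carrier (Kfree v n)"
    by (auto intro: mult_le_one)
qed (auto simp: distrib_right distrib_left mult.assoc)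

lemma Kfree_minus:
  assumes "x \<in> carrier (Kfree v n)"
  shows "\<ominus>\<^bsub>Kfree v n\<^esub> x = (\<lambda>i. - x i)"
  using assms by (intro abelian_group.minus_equality[OF Kfree_abelian_group]) auto

end

lemma seq_increasing_to_1:
  obtains t :: "nat \<Rightarrow> real"
  where "\<And>n. 0 < t n" "\<And>n. t n < 1" "\<And>n. t n \<le> t (Suc n)" "\<And>q. q < 1 \<Longrightarrow> \<exists>n. q < t n"
proof
  let ?t = "\<lambda>n::nat. 1 - 1 / real (n + 2)"
  show "0 < ?t n" "?t n < 1" "?t n \<le> ?t (Suc n)" for n
    by (auto simp: field_simps)
  show "\<exists>n. q < ?t n" if "q < 1" for q
  proof -
    have "0 < 1 - q"
      using that by simp
    then obtain n where n: "n > 0" "inverse (real n) < 1 - q"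
      using ex_inverse_of_nat_less by blast
    have "1 / real (n + 2) < inverse (real n)"
      using n(1) by (simp add: field_simps)
    with n(2) show ?thesis
      by (intro exI[of _ n]) linarith
  qed
qed

locale full_valued = nonarch_valued +
  assumes value_group_eq: "value_group v = {0<..}"
begin

lemma exists_value: "t > 0 \<Longrightarrow> \<exists>x. v x = t"
  using value_group_eq unfolding value_group_def by (metis greaterThan_iff image_iff)

end

locale sph_valued = full_valued +
  assumes sph: "spherically_complete v"
begin

lemma pseudo_limit:
  assumes "\<And>n. \<rho> n > 0" "\<And>n. \<rho> (Suc n) \<le> \<rho> n" "\<And>n. v (x (Suc n) - x n) \<le> \<rho> n"
  shows "\<exists>z. \<forall>n. v (z - x n) \<le> \<rho> n"
proof -
  have "cball_v v (x (Suc n)) (\<rho> (Suc n)) \<subseteq> cball_v v (x n) (\<rho> n)" for n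
  proof
    fix y assume "y \<in> cball_v v (x (Suc n)) (\<rho> (Suc n))"
    then have "v (y - x (Suc n)) \<le> \<rho> n"
      using assms(2)[of n] unfolding cball_v_def by simp
    then show "y \<in> cball_v v (x n) (\<rho> n)"
      using assms(3)[of n] v_diff_triangle[of y "x n" "x (Suc n)"] unfolding cball_v_def by simp
  qed
  then have "(\<Inter>n. cball_v v (x n) (\<rho> n)) \<noteq> {}"
    using sph assms(1) unfolding spherically_complete_def by blast
  then show ?thesis
    unfolding cball_v_def by blast
qed

end

section \<open>Lattices in \<open>K\<^sup>r\<close> have almost bases\<close>

definition supp_lt :: "nat \<Rightarrow> (nat \<Rightarrow> 'k::zero) set" where
  "supp_lt r = {x. \<forall>i\<ge>r. x i = 0}"

definition lincomb :: "(nat \<Rightarrow> nat \<Rightarrow> 'k::comm_ring_1) \<Rightarrow> nat \<Rightarrow> (nat \<Rightarrow> 'k) \<Rightarrow> nat \<Rightarrow> 'k" where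
  "lincomb e r x = (\<lambda>j. \<Sum>i<r. x i * e i j)"

lemma carrier_Kfree_iff: "x \<in> carrier (Kfree v r) \<longleftrightarrow> x \<in> supp_lt r \<and> (\<forall>i. v (x i) \<le> 1)"
  by (auto simp: supp_lt_def)

lemma lincomb_add: "lincomb e r (\<lambda>i. x i + y i) = (\<lambda>j. lincomb e r x j + lincomb e r y j)"
  unfolding lincomb_def by (simp add: distrib_right sum.distrib)

lemma lincomb_diff: "lincomb e r (\<lambda>i. x i - y i) = (\<lambda>j. lincomb e r x j - lincomb e r y j)"
  unfolding lincomb_def by (simp add: left_diff_distrib sum_subtractf)

lemma lincomb_scale: "lincomb e r (\<lambda>i. c * x i) = (\<lambda>j. c * lincomb e r x j)"
  unfolding lincomb_def by (simp add: sum_distrib_left mult.assoc)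

lemma lincomb_divide: "lincomb e r (\<lambda>i. x i / c) = (\<lambda>j. lincomb e r x j / (c::'k::field))"
  unfolding lincomb_def by (simp add: sum_divide_distrib)

lemma lincomb_cong: "(\<And>i. i < r \<Longrightarrow> x i = y i) \<Longrightarrow> lincomb e r x = lincomb e r y"
  unfolding lincomb_def by (intro ext sum.cong) auto

lemma lincomb_Suc_upd: "lincomb (e(r := w)) (Suc r) x = (\<lambda>j. lincomb e r x j + x r * w j)"
proof -
  have "(\<Sum>i<r. x i * (e(r := w)) i j) = (\<Sum>i<r. x i * e i j)" for j
    by (intro sum.cong) auto
  then show ?thesis
    unfolding lincomb_def by (simp add: fun_eq_iff)
qed

lemma lincomb_in_supp_lt: "(\<And>i. i < r \<Longrightarrow> e i \<in> supp_lt s) \<Longrightarrow> lincomb e r x \<in> supp_lt s"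
  unfolding lincomb_def supp_lt_def by auto

lemma supp_lt_Suc: "x \<in> supp_lt r \<Longrightarrow> x \<in> supp_lt (Suc r)"
  unfolding supp_lt_def by auto

definition Klattice :: "('k::field \<Rightarrow> real) \<Rightarrow> nat \<Rightarrow> (nat \<Rightarrow> 'k) set \<Rightarrow> bool" where
  "Klattice v r L \<longleftrightarrow> L \<subseteq> carrier (Kfree v r) \<and>
     (\<forall>x\<in>L. \<forall>y\<in>L. (\<lambda>i. x i + y i) \<in> L) \<and>
     (\<forall>a. \<forall>x\<in>L. v a \<le> 1 \<longrightarrow> (\<lambda>i. a * x i) \<in> L) \<and>
     (\<exists>c. c \<noteq> 0 \<and> (\<forall>x\<in>carrier (Kfree v r). (\<lambda>i. c * x i) \<in> L))"

text \<open>Such an \<open>e\<close> makes \<open>L\<close> almost isomorphic to \<open>(K\<^sup>\<circ>)\<^sup>r\<close>.\<close>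
definition almost_basis :: "('k::field \<Rightarrow> real) \<Rightarrow> nat \<Rightarrow> (nat \<Rightarrow> 'k) set \<Rightarrow> (nat \<Rightarrow> nat \<Rightarrow> 'k) \<Rightarrow> bool" where
  "almost_basis v r L e \<longleftrightarrow> (\<forall>i<r. e i \<in> supp_lt r) \<and>
     (\<forall>x. lincomb e r x = (\<lambda>_. 0) \<longrightarrow> (\<forall>i<r. x i = 0)) \<and>
     (\<forall>x. (\<forall>i. v (x i) < 1) \<longrightarrow> lincomb e r x \<in> L) \<and>
     (\<forall>y\<in>L. \<exists>x\<in>carrier (Kfree v r). lincomb e r x = y)"

text \<open>A candidate last vector for extending an almost basis \<open>e\<close> of the slice
  \<open>{x \<in> L. x r = 0}\<close> to one of \<open>L\<close>.\<close>
definition pivot :: "('k::field \<Rightarrow> real) \<Rightarrow> nat \<Rightarrow> (nat \<Rightarrow> 'k) set \<Rightarrow> (nat \<Rightarrow> nat \<Rightarrow> 'k) \<Rightarrow> (nat \<Rightarrow> 'k) \<Rightarrow> bool" where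
  "pivot v r L e w \<longleftrightarrow> w \<in> supp_lt (Suc r) \<and> w r \<noteq> 0 \<and> (\<forall>y\<in>L. v (y r) \<le> v (w r)) \<and>
     (\<forall>b. v b < 1 \<longrightarrow> (\<lambda>i. b * w i) \<in> L) \<and>
     (\<forall>y\<in>L. \<exists>x\<in>carrier (Kfree v r). lincomb e r x = (\<lambda>i. y i - y r / w r * w i))"

context nonarch_valued
begin

lemma Klattice_subset: "Klattice v r L \<Longrightarrow> x \<in> L \<Longrightarrow> x \<in> carrier (Kfree v r)"
  unfolding Klattice_def by blast

lemma Klattice_add: "Klattice v r L \<Longrightarrow> x \<in> L \<Longrightarrow> y \<in> L \<Longrightarrow> (\<lambda>i. x i + y i) \<in> L"
  unfolding Klattice_def by blast

lemma Klattice_scale: "Klattice v r L \<Longrightarrow> x \<in> L \<Longrightarrow> v a \<le> 1 \<Longrightarrow> (\<lambda>i. a * x i) \<in> L"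
  unfolding Klattice_def by blast

lemma Klattice_diff:
  assumes "Klattice v r L" "x \<in> L" "y \<in> L"
  shows "(\<lambda>i. x i - y i) \<in> L"
  using Klattice_add[OF assms(1,2) Klattice_scale[OF assms(1,3), of "-1"]] by simp

lemma Klattice_zero: "Klattice v r L \<Longrightarrow> (\<lambda>_. 0) \<in> L"
  unfolding Klattice_def by force

lemma Klattice_slice:
  assumes L: "Klattice v (Suc r) L"
  shows "Klattice v r {x\<in>L. x r = 0}"
proof -
  obtain c where c: "c \<noteq> 0" "\<forall>x\<in>carrier (Kfree v (Suc r)). (\<lambda>i. c * x i) \<in> L"
    using L unfolding Klattice_def by blast
  have "x \<in> carrier (Kfree v r)" if "x \<in> L" "x r = 0" for x
  proof -
    have "x i = 0" if "i \<ge> r" for i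
      using Klattice_subset[OF L \<open>x \<in> L\<close>] \<open>x r = 0\<close> that by (cases "i = r") auto
    then show ?thesis
      using Klattice_subset[OF L \<open>x \<in> L\<close>] by simp
  qed
  moreover have "(\<lambda>i. c * x i) \<in> {x\<in>L. x r = 0}" if "x \<in> carrier (Kfree v r)" for x
    using c(2) that by auto
  ultimately show ?thesis
    using c(1) Klattice_add[OF L] Klattice_scale[OF L] unfolding Klattice_def by auto
qed

lemma almost_basis_lincomb_last: "almost_basis v r L e \<Longrightarrow> lincomb e r x r = 0"
  using lincomb_in_supp_lt[of r e r x] unfolding almost_basis_def supp_lt_def by auto

lemma almost_basis_Suc:
  assumes L: "Klattice v (Suc r) L" and e: "almost_basis v r {x\<in>L. x r = 0} e"
    and w: "pivot v r L e w"
  shows "almost_basis v (Suc r) L (e(r := w))"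
  unfolding almost_basis_def
proof (intro conjI allI impI ballI)
  note upd = lincomb_Suc_upd[of e r w]
  have e_supp: "\<And>i. i < r \<Longrightarrow> e i \<in> supp_lt r"
    and e_indep: "\<And>x. lincomb e r x = (\<lambda>_. 0) \<Longrightarrow> \<forall>i<r. x i = 0"
    and e_small: "\<And>x. \<forall>i. v (x i) < 1 \<Longrightarrow> lincomb e r x \<in> L"
    using e unfolding almost_basis_def by auto
  have w_supp: "w \<in> supp_lt (Suc r)" and wr: "w r \<noteq> 0" and w_max: "\<forall>y\<in>L. v (y r) \<le> v (w r)"
    and w_small: "\<And>b. v b < 1 \<Longrightarrow> (\<lambda>i. b * w i) \<in> L"
    and w_span: "\<And>y. y \<in> L \<Longrightarrow> \<exists>x\<in>carrier (Kfree v r). lincomb e r x = (\<lambda>i. y i - y r / w r * w i)"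
    using w unfolding pivot_def by auto
  show "(e(r := w)) i \<in> supp_lt (Suc r)" if "i < Suc r" for i
    using that e_supp w_supp supp_lt_Suc by (auto simp: less_Suc_eq)
  show "x i = 0" if x: "lincomb (e(r := w)) (Suc r) x = (\<lambda>_. 0)" and i: "i < Suc r" for x i
  proof -
    have x': "lincomb e r x j + x r * w j = 0" for j
      using x unfolding upd by metis
    then have "x r = 0"
      using x'[of r] almost_basis_lincomb_last[OF e] wr by simp
    with x' have "lincomb e r x = (\<lambda>_. 0)"
      by (simp add: fun_eq_iff)
    with e_indep \<open>x r = 0\<close> i show ?thesis
      by (auto simp: less_Suc_eq)
  qed
  show "lincomb (e(r := w)) (Suc r) x \<in> L" if "\<forall>i. v (x i) < 1" for x
    unfolding upd using Klattice_add[OF L e_small w_small] that by blast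
  show "\<exists>x\<in>carrier (Kfree v (Suc r)). lincomb (e(r := w)) (Suc r) x = y" if y: "y \<in> L" for y
  proof -
    obtain x where x: "x \<in> carrier (Kfree v r)" "lincomb e r x = (\<lambda>i. y i - y r / w r * w i)"
      using w_span[OF y] by blast
    have "v (y r) / v (w r) \<le> 1"
      using w_max y wr by simp
    then have "x(r := y r / w r) \<in> carrier (Kfree v (Suc r))"
      using x(1) by auto
    moreover have "lincomb e r (x(r := y r / w r)) = lincomb e r x"
      by (rule lincomb_cong) auto
    then have "lincomb (e(r := w)) (Suc r) (x(r := y r / w r)) = y"
      unfolding upd using x(2) by (simp add: fun_eq_iff)
    ultimately show ?thesis
      by blast
  qed
qed

lemma pivot_of_max:
  assumes L: "Klattice v (Suc r) L" and e: "almost_basis v r {x\<in>L. x r = 0} e"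
    and y0: "y0 \<in> L" "y0 r \<noteq> 0" "\<forall>y\<in>L. v (y r) \<le> v (y0 r)"
  shows "pivot v r L e y0"
  unfolding pivot_def
proof (intro conjI allI impI ballI)
  show "y0 \<in> supp_lt (Suc r)"
    using Klattice_subset[OF L y0(1)] carrier_Kfree_iff by blast
  show "(\<lambda>i. b * y0 i) \<in> L" if "v b < 1" for b
    using Klattice_scale[OF L y0(1)] that by simp
  show "\<exists>x\<in>carrier (Kfree v r). lincomb e r x = (\<lambda>i. y i - y r / y0 r * y0 i)" if y: "y \<in> L" for y
  proof -
    have "v (y r) / v (y0 r) \<le> 1"
      using y0 y by simp
    then have "(\<lambda>i. y r / y0 r * y0 i) \<in> L"
      using Klattice_scale[OF L y0(1), of "y r / y0 r"] by simp
    then have "(\<lambda>i. y i - y r / y0 r * y0 i) \<in> L"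
      using Klattice_diff[OF L y] by blast
    with y0(2) e show ?thesis
      unfolding almost_basis_def by auto
  qed
qed (use y0 in auto)

lemma pivot_of_approx:
  assumes L: "Klattice v (Suc r) L" and e: "almost_basis v r {x\<in>L. x r = 0} e"
    and w: "w \<in> supp_lt (Suc r)" "w r \<noteq> 0" "\<forall>y\<in>L. v (y r) < v (w r)"
    and approx: "\<And>q. q < 1 \<Longrightarrow> \<exists>t>q. \<exists>d\<in>supp_lt r. (\<forall>j. v (d j) \<le> 1 / t) \<and>
        (\<forall>c. v c \<le> t \<longrightarrow> (\<lambda>i. c * (w i - lincomb e r d i)) \<in> L)"
  shows "pivot v r L e w"
proof -
  have e_small: "\<And>x. \<forall>i. v (x i) < 1 \<Longrightarrow> lincomb e r x \<in> L"
    and e_span: "\<And>y. y \<in> L \<Longrightarrow> y r = 0 \<Longrightarrow> \<exists>x\<in>carrier (Kfree v r). lincomb e r x = y"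
    using e unfolding almost_basis_def by auto
  have small: "v (c * d j) < 1" if "v c < t" "\<forall>j. v (d j) \<le> 1 / t" for c t d j
    using v_mult_less_1_of_le_inverse that by blast
  have "(\<lambda>i. b * w i) \<in> L" if b: "v b < 1" for b
  proof -
    obtain t d where t: "v b < t" and d: "\<forall>j. v (d j) \<le> 1 / t"
      and approx_t: "\<forall>c. v c \<le> t \<longrightarrow> (\<lambda>i. c * (w i - lincomb e r d i)) \<in> L"
      using approx[OF b] by blast
    have "(\<lambda>i. b * (w i - lincomb e r d i) + lincomb e r (\<lambda>j. b * d j) i) \<in> L"
      using Klattice_add[OF L] approx_t e_small small[OF t d] t by simp
    then show ?thesis
      by (simp add: lincomb_scale algebra_simps)
  qed
  moreover have "\<exists>x\<in>carrier (Kfree v r). lincomb e r x = (\<lambda>i. y i - y r / w r * w i)"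
    if y: "y \<in> L" for y
  proof -
    define c where "c = y r / w r"
    have "v c < 1"
      using w(2,3) y unfolding c_def by (simp add: divide_less_eq)
    then obtain t d where t: "v c < t" and d: "d \<in> supp_lt r" "\<forall>j. v (d j) \<le> 1 / t"
      and approx_t: "\<forall>c. v c \<le> t \<longrightarrow> (\<lambda>i. c * (w i - lincomb e r d i)) \<in> L"
      using approx by blast
    define Y where "Y = (\<lambda>i. y i - c * (w i - lincomb e r d i))"
    have "Y \<in> L"
      unfolding Y_def using Klattice_diff[OF L y] approx_t t by simp
    moreover have "Y r = 0"
      unfolding Y_def c_def using almost_basis_lincomb_last[OF e] w(2) by simp
    ultimately obtain x1 where x1: "x1 \<in> carrier (Kfree v r)" "lincomb e r x1 = Y"
      using e_span by blast
    have "v (x1 j - c * d j) \<le> 1" for j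
    proof -
      have "v (x1 j) \<le> 1"
        using x1(1) by simp
      then show ?thesis
        using small[OF t d(2), of j] v_diff_le[of "x1 j" "c * d j"] by linarith
    qed
    then have "(\<lambda>j. x1 j - c * d j) \<in> carrier (Kfree v r)"
      using x1(1) d(1) unfolding supp_lt_def by simp
    moreover have "lincomb e r (\<lambda>j. x1 j - c * d j) = (\<lambda>i. y i - c * w i)"
      unfolding lincomb_diff lincomb_scale x1(2) Y_def by (simp add: algebra_simps)
    ultimately show ?thesis
      unfolding c_def by blast
  qed
  ultimately show ?thesis
    using w unfolding pivot_def by (auto intro: less_imp_le)
qed

lemma exists_approx_pivots:
  assumes L: "Klattice v (Suc r) L" and sup: "\<forall>q<v a. \<exists>y\<in>L. q < v (y r)" and "a \<noteq> 0"
    and t: "\<And>n. 0 \<le> t n" "\<And>n. t n < 1"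
  obtains P where "\<And>n. P n \<in> supp_lt (Suc r)" "\<And>n. P n r = a"
    "\<And>n c. v c \<le> t n \<Longrightarrow> (\<lambda>i. c * P n i) \<in> L"
proof -
  have "\<exists>p. p \<in> supp_lt (Suc r) \<and> p r = a \<and> (\<forall>c. v c \<le> t n \<longrightarrow> (\<lambda>i. c * p i) \<in> L)" for n
  proof -
    have "t n * v a < v a"
      using t \<open>a \<noteq> 0\<close> by simp
    then obtain y where y: "y \<in> L" "t n * v a < v (y r)"
      using sup by blast
    then have yr: "y r \<noteq> 0"
      using t(1)[of n] v_nonneg[of a] by (metis mult_nonneg_nonneg not_le v_zero)
    have "(\<lambda>i. c * (a / y r * y i)) \<in> L" if c: "v c \<le> t n" for c
    proof -
      have "v c * v a \<le> t n * v a"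
        using mult_right_mono[OF c v_nonneg[of a]] .
      then have "v (c * a / y r) \<le> 1"
        using y(2) yr by (simp add: divide_le_eq)
      then have "(\<lambda>i. c * a / y r * y i) \<in> L"
        using Klattice_scale[OF L y(1)] by blast
      then show ?thesis
        by (simp add: mult.assoc)
    qed
    moreover have "(\<lambda>i. a / y r * y i) \<in> supp_lt (Suc r)"
      using Klattice_subset[OF L y(1)] unfolding supp_lt_def by simp
    ultimately show ?thesis
      using yr by (intro exI[of _ "\<lambda>i. a / y r * y i"]) simp
  qed
  then show ?thesis
    using that choice[of "\<lambda>n p. p \<in> supp_lt (Suc r) \<and> p r = a \<and>
        (\<forall>c. v c \<le> t n \<longrightarrow> (\<lambda>i. c * p i) \<in> L)"] by blast
qed

end

context full_valued
begin

lemma approx_pivot_coordinates: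
  assumes L: "Klattice v (Suc r) L" and e: "almost_basis v r {x\<in>L. x r = 0} e"
    and P: "\<And>n. P n r = a" "\<And>n c. v c \<le> t n \<Longrightarrow> (\<lambda>i. c * P n i) \<in> L"
    and t: "\<And>n. 0 < t n" "\<And>n. t n \<le> t (Suc n)"
  obtains W where "\<And>n. W n \<in> supp_lt r" "\<And>n. P n = (\<lambda>i. P 0 i + lincomb e r (W n) i)"
    "\<And>n j. v (W (Suc n) j - W n j) \<le> 1 / t n"
proof -
  have "\<forall>n. \<exists>x. v x = t n"
    using exists_value t(1) by blast
  then obtain b where b: "\<And>n. v (b n) = t n"
    by metis
  then have b_nz: "b n \<noteq> 0" for n
    using t(1)[of n] v_pos_iff by metis
  have "\<exists>u\<in>carrier (Kfree v r). lincomb e r u = (\<lambda>i. b n * (P (Suc n) i - P n i))" for n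
  proof -
    have "(\<lambda>i. b n * P (Suc n) i) \<in> L" "(\<lambda>i. b n * P n i) \<in> L"
      using P(2)[of "b n" "Suc n"] P(2)[of "b n" n] b t(2)[of n] by simp_all
    then have "(\<lambda>i. b n * (P (Suc n) i - P n i)) \<in> L"
      using Klattice_diff[OF L] by (simp add: right_diff_distrib)
    moreover have "b n * (P (Suc n) r - P n r) = 0"
      using P(1) by simp
    ultimately show ?thesis
      using e unfolding almost_basis_def by blast
  qed
  then obtain u where u: "\<And>n. u n \<in> carrier (Kfree v r)"
    "\<And>n. lincomb e r (u n) = (\<lambda>i. b n * (P (Suc n) i - P n i))"
    by metis
  define W where "W n = (\<lambda>i. \<Sum>k<n. u k i / b k)" for n
  show ?thesis
  proof
    show "W n \<in> supp_lt r" for n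
      using u(1) unfolding W_def supp_lt_def by simp
    show "P n = (\<lambda>i. P 0 i + lincomb e r (W n) i)" for n
    proof (induction n)
      case 0
      show ?case
        unfolding W_def lincomb_def by simp
    next
      case (Suc n)
      have "W (Suc n) = (\<lambda>i. W n i + u n i / b n)"
        unfolding W_def by simp
      then have "lincomb e r (W (Suc n)) = (\<lambda>i. lincomb e r (W n) i + (P (Suc n) i - P n i))"
        using u(2)[of n] b_nz[of n] by (simp add: lincomb_add lincomb_divide)
      then show ?case
        using Suc.IH by (simp add: fun_eq_iff)
    qed
    show "v (W (Suc n) j - W n j) \<le> 1 / t n" for n j
      using u(1)[of n] b[of n] t(1)[of n] unfolding W_def by (simp add: divide_right_mono)
  qed
qed

end

context sph_valued
begin

lemma pseudo_limit_vec:
  assumes "\<And>n. \<rho> n > 0" "\<And>n. \<rho> (Suc n) \<le> \<rho> n" "\<And>n. W n \<in> supp_lt r"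
    and "\<And>n j. v (W (Suc n) j - W n j) \<le> \<rho> n"
  shows "\<exists>z\<in>supp_lt r. \<forall>n j. v (z j - W n j) \<le> \<rho> n"
proof -
  have "\<exists>z. \<forall>n. v (z - W n j) \<le> \<rho> n" for j
    using pseudo_limit[of \<rho> "\<lambda>n. W n j"] assms(1,2,4) by blast
  then obtain z where z: "\<And>j n. v (z j - W n j) \<le> \<rho> n"
    by metis
  define z' where "z' j = (if j < r then z j else 0)" for j
  have "v (z' j - W n j) \<le> \<rho> n" for n j
    using z[of j n] assms(1)[of n] assms(3)[of n] unfolding z'_def supp_lt_def by auto
  moreover have "z' \<in> supp_lt r"
    unfolding z'_def supp_lt_def by simp
  ultimately show ?thesis
    by blast
qed

lemma pivot_of_sup_not_attained:
  assumes L: "Klattice v (Suc r) L" and e: "almost_basis v r {x\<in>L. x r = 0} e"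
    and s: "s > 0" "\<forall>y\<in>L. v (y r) < s" "\<forall>q<s. \<exists>y\<in>L. q < v (y r)"
  shows "\<exists>w. pivot v r L e w"
proof -
  obtain a where a: "v a = s"
    using exists_value s(1) by blast
  then have "a \<noteq> 0"
    using s(1) by auto
  obtain t :: "nat \<Rightarrow> real" where t: "\<And>n. 0 < t n" "\<And>n. t n < 1" "\<And>n. t n \<le> t (Suc n)"
    "\<And>q. q < 1 \<Longrightarrow> \<exists>n. q < t n"
    using seq_increasing_to_1 by blast
  have sup: "\<forall>q<v a. \<exists>y\<in>L. q < v (y r)"
    using s(3) a by simp
  have t_nonneg: "0 \<le> t n" for n
    using t(1)[of n] by simp
  obtain P where P: "\<And>n. P n \<in> supp_lt (Suc r)" "\<And>n. P n r = a"
    "\<And>n c. v c \<le> t n \<Longrightarrow> (\<lambda>i. c * P n i) \<in> L"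
    using exists_approx_pivots[OF L sup \<open>a \<noteq> 0\<close>, where t = t, OF t_nonneg t(2)] by blast
  obtain W where W: "\<And>n. W n \<in> supp_lt r" "\<And>n. P n = (\<lambda>i. P 0 i + lincomb e r (W n) i)"
    "\<And>n j. v (W (Suc n) j - W n j) \<le> 1 / t n"
    using approx_pivot_coordinates[OF L e, where P = P and a = a and t = t, OF P(2,3) t(1,3)] by blast
  have "1 / t (Suc n) \<le> 1 / t n" for n
    using t(1,3) by (simp add: frac_le)
  then obtain z where z: "z \<in> supp_lt r" "\<And>n j. v (z j - W n j) \<le> 1 / t n"
    using pseudo_limit_vec[of "\<lambda>n. 1 / t n" W r] t(1) W(1,3) by auto
  define w where "w = (\<lambda>i. P 0 i + lincomb e r z i)"
  have P_eq: "w i - lincomb e r (\<lambda>j. z j - W n j) i = P n i" for n i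
    by (subst W(2)[of n]) (simp add: w_def lincomb_diff)
  have "lincomb e r z \<in> supp_lt r"
    using e lincomb_in_supp_lt unfolding almost_basis_def by blast
  then have w: "w \<in> supp_lt (Suc r)" "w r = a"
    using P(1,2)[of 0] unfolding w_def supp_lt_def by auto
  show ?thesis
  proof (rule exI, rule pivot_of_approx[OF L e w(1)])
    fix q :: real assume "q < 1"
    then obtain n where "q < t n"
      using t(4) by blast
    moreover have "(\<lambda>j. z j - W n j) \<in> supp_lt r"
      using z(1) W(1)[of n] unfolding supp_lt_def by simp
    ultimately show "\<exists>t>q. \<exists>d\<in>supp_lt r. (\<forall>j. v (d j) \<le> 1 / t) \<and>
        (\<forall>c. v c \<le> t \<longrightarrow> (\<lambda>i. c * (w i - lincomb e r d i)) \<in> L)"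
      using z(2) P(3) P_eq by (intro exI[of _ "t n"] conjI bexI[of _ "\<lambda>j. z j - W n j"]) auto
  qed (use w a s \<open>a \<noteq> 0\<close> in auto)
qed

lemma pivot_exists:
  assumes L: "Klattice v (Suc r) L" and e: "almost_basis v r {x\<in>L. x r = 0} e"
  shows "\<exists>w. pivot v r L e w"
proof -
  define s where "s = Sup ((\<lambda>y. v (y r)) ` L)"
  have bdd: "bdd_above ((\<lambda>y. v (y r)) ` L)"
    using Klattice_subset[OF L] by (intro bdd_aboveI[of _ 1]) auto
  have le_s: "v (y r) \<le> s" if "y \<in> L" for y
    unfolding s_def using cSup_upper[OF _ bdd] that by blast
  obtain c where c: "c \<noteq> 0" "\<forall>x\<in>carrier (Kfree v (Suc r)). (\<lambda>i. c * x i) \<in> L"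
    using L unfolding Klattice_def by blast
  have "(\<lambda>i. c * (if i = r then 1 else 0)) \<in> L"
    using c(2) by simp
  then have "v c \<le> s"
    using le_s by force
  then have "s > 0"
    using c(1) v_pos_iff[of c] by linarith
  show ?thesis
  proof (cases "\<exists>y0\<in>L. v (y0 r) = s")
    case True
    then obtain y0 where "y0 \<in> L" "v (y0 r) = s"
      by blast
    then show ?thesis
      using pivot_of_max[OF L e] le_s \<open>s > 0\<close> by fastforce
  next
    case False
    have "\<forall>q<s. \<exists>y\<in>L. q < v (y r)"
      unfolding s_def using less_cSup_iff[OF _ bdd] Klattice_zero[OF L] by blast
    with False show ?thesis
      using pivot_of_sup_not_attained[OF L e \<open>s > 0\<close>] le_s by (meson less_eq_real_def)
  qed
qed

theorem Klattice_almost_basis: "Klattice v r L \<Longrightarrow> \<exists>e. almost_basis v r L e"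
proof (induction r arbitrary: L)
  case 0
  have "y = (\<lambda>_. 0)" if "y \<in> L" for y
    using Klattice_subset[OF 0 that] by auto
  then have "L = {\<lambda>_. 0}"
    using Klattice_zero[OF 0] by blast
  then show ?case
    unfolding almost_basis_def lincomb_def by (auto intro: exI[of _ "\<lambda>_. 0"])
next
  case (Suc r)
  obtain e where e: "almost_basis v r {x\<in>L. x r = 0} e"
    using Suc.IH[OF Klattice_slice[OF Suc.prems]] by blast
  then obtain w where "pivot v r L e w"
    using pivot_exists[OF Suc.prems] by blast
  then show ?case
    using almost_basis_Suc[OF Suc.prems e] by blast
qed

end

section \<open>Roofs out of \<open>(K\<^sup>\<circ>)\<^sup>r\<close>\<close>

context module
begin

lemma submodule_zero_closed: "submodule H R M \<Longrightarrow> \<zero>\<^bsub>M\<^esub> \<in> H"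
  using submoduleE(2,3,5)[of H] by (metis all_not_in_conv submoduleE(1) subsetD r_neg)

lemma submodule_diff_closed: "submodule H R M \<Longrightarrow> a \<in> H \<Longrightarrow> b \<in> H \<Longrightarrow> a \<ominus>\<^bsub>M\<^esub> b \<in> H"
  using submoduleE(3,5) by (simp add: a_minus_def)

lemma submodule_diff_sym:
  assumes "submodule H R M" "a \<in> carrier M" "b \<in> carrier M" "a \<ominus>\<^bsub>M\<^esub> b \<in> H"
  shows "b \<ominus>\<^bsub>M\<^esub> a \<in> H"
proof -
  have "b \<ominus>\<^bsub>M\<^esub> a = \<ominus>\<^bsub>M\<^esub> (a \<ominus>\<^bsub>M\<^esub> b)"
    using assms(2,3) by (simp add: a_minus_def minus_add a_comm)
  then show ?thesis
    using submoduleE(3)[OF assms(1,4)] by simp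
qed

lemma submodule_diff_trans:
  assumes "submodule H R M" "a \<in> carrier M" "b \<in> carrier M" "c \<in> carrier M"
    "a \<ominus>\<^bsub>M\<^esub> b \<in> H" "b \<ominus>\<^bsub>M\<^esub> c \<in> H"
  shows "a \<ominus>\<^bsub>M\<^esub> c \<in> H"
proof -
  have "a \<ominus>\<^bsub>M\<^esub> c = (a \<ominus>\<^bsub>M\<^esub> b) \<oplus>\<^bsub>M\<^esub> (b \<ominus>\<^bsub>M\<^esub> c)"
    using assms(2-4) by (simp add: a_minus_def a_assoc a_assoc[symmetric] l_neg)
  then show ?thesis
    using submoduleE(5)[OF assms(1,5,6)] by simp
qed

lemma submodule_diff_add:
  assumes "submodule H R M" "a \<in> carrier M" "b \<in> carrier M" "c \<in> carrier M" "d \<in> carrier M"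
    "a \<ominus>\<^bsub>M\<^esub> b \<in> H" "c \<ominus>\<^bsub>M\<^esub> d \<in> H"
  shows "(a \<oplus>\<^bsub>M\<^esub> c) \<ominus>\<^bsub>M\<^esub> (b \<oplus>\<^bsub>M\<^esub> d) \<in> H"
proof -
  have "(a \<oplus>\<^bsub>M\<^esub> c) \<ominus>\<^bsub>M\<^esub> (b \<oplus>\<^bsub>M\<^esub> d) = (a \<ominus>\<^bsub>M\<^esub> b) \<oplus>\<^bsub>M\<^esub> (c \<ominus>\<^bsub>M\<^esub> d)"
    using assms(2-5) by (simp add: a_minus_def minus_add a_ac)
  then show ?thesis
    using submoduleE(5)[OF assms(1,6,7)] by simp
qed

lemma submodule_diff_smult:
  assumes "submodule H R M" "a \<in> carrier R" "x \<in> carrier M" "y \<in> carrier M" "x \<ominus>\<^bsub>M\<^esub> y \<in> H"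
  shows "(a \<odot>\<^bsub>M\<^esub> x) \<ominus>\<^bsub>M\<^esub> (a \<odot>\<^bsub>M\<^esub> y) \<in> H"
proof -
  have "a \<odot>\<^bsub>M\<^esub> (x \<ominus>\<^bsub>M\<^esub> y) = (a \<odot>\<^bsub>M\<^esub> x) \<ominus>\<^bsub>M\<^esub> (a \<odot>\<^bsub>M\<^esub> y)"
    using assms(2-4) by (simp add: a_minus_def smult_r_distr smult_r_minus)
  then show ?thesis
    using submoduleE(4)[OF assms(1,2,5)] by simp
qed

lemma submodule_of_diff:
  assumes "submodule H R M" "a \<in> carrier M" "b \<in> carrier M" "a \<ominus>\<^bsub>M\<^esub> b \<in> H" "b \<in> H"
  shows "a \<in> H"
proof -
  have "a = (a \<ominus>\<^bsub>M\<^esub> b) \<oplus>\<^bsub>M\<^esub> b"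
    using assms(2,3) by (simp add: a_minus_def a_assoc l_neg)
  then show ?thesis
    using submoduleE(5)[OF assms(1,4,5)] by simp
qed

end

definition roof_rep ::
  "('k, 'm, 'c) module_scheme \<Rightarrow> 'a set \<Rightarrow> 'm set \<Rightarrow> ('a \<Rightarrow> 'm) \<Rightarrow> 'k \<Rightarrow> 'm \<Rightarrow> 'a \<Rightarrow> bool" where
  "roof_rep M A' B' g \<kappa> y x \<longleftrightarrow> x \<in> A' \<and> \<kappa> \<odot>\<^bsub>M\<^esub> y \<ominus>\<^bsub>M\<^esub> g x \<in> B'"

locale valued_module = nonarch_valued v + module "Kint v" M
  for v :: "'k::field \<Rightarrow> real" and M :: "('k, 'm) module"

context valued_module
begin

lemma add_smult_minus_one: "y \<in> carrier M \<Longrightarrow> y \<oplus>\<^bsub>M\<^esub> (- 1) \<odot>\<^bsub>M\<^esub> y = \<zero>\<^bsub>M\<^esub>"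
  using smult_l_distr[of 1 "- 1" y] smult_one[of y] smult_l_null[of y] by simp

end

locale Kfree_roof = valued_module +
  fixes r :: nat and A' :: "(nat \<Rightarrow> 'k::field) set" and B' :: "'m set" and g :: "(nat \<Rightarrow> 'k) \<Rightarrow> 'm"
  assumes roof: "almost_roof v (Kfree v r) M A' B' g"
begin

lemma A'_submodule: "submodule A' (Kint v) (Kfree v r)"
  using roof unfolding almost_roof_def by blast

lemma B'_submodule: "submodule B' (Kint v) M"
  using roof unfolding almost_roof_def by blast

lemma A'_subset: "x \<in> A' \<Longrightarrow> x \<in> carrier (Kfree v r)"
  using module.submoduleE(1)[OF Kfree_module A'_submodule] by blast

lemma A'_zero: "(\<lambda>_. 0) \<in> A'"
  using module.submodule_zero_closed[OF Kfree_module A'_submodule] by simp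

lemma A'_add: "x \<in> A' \<Longrightarrow> y \<in> A' \<Longrightarrow> (\<lambda>i. x i + y i) \<in> A'"
  using module.submoduleE(5)[OF Kfree_module A'_submodule] by simp

lemma A'_scale: "v a \<le> 1 \<Longrightarrow> x \<in> A' \<Longrightarrow> (\<lambda>i. a * x i) \<in> A'"
  using module.submoduleE(4)[OF Kfree_module A'_submodule] by simp

lemma Kmax_scale_in_A': "v d < 1 \<Longrightarrow> x \<in> carrier (Kfree v r) \<Longrightarrow> (\<lambda>i. d * x i) \<in> A'"
  using roof unfolding almost_roof_def almost_zero_sq_def Kmax_def by auto

lemma B'_killed: "v d < 1 \<Longrightarrow> y \<in> B' \<Longrightarrow> d \<odot>\<^bsub>M\<^esub> y = \<zero>\<^bsub>M\<^esub>"
  using roof unfolding almost_roof_def almost_zero_sq_def Kmax_def by blast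

lemma g_closed: "x \<in> A' \<Longrightarrow> g x \<in> carrier M"
  using roof unfolding almost_roof_def by blast

lemma g_add: "x \<in> A' \<Longrightarrow> y \<in> A' \<Longrightarrow> g (\<lambda>i. x i + y i) \<ominus>\<^bsub>M\<^esub> (g x \<oplus>\<^bsub>M\<^esub> g y) \<in> B'"
  using roof unfolding almost_roof_def by auto

lemma g_scale: "v a \<le> 1 \<Longrightarrow> x \<in> A' \<Longrightarrow> g (\<lambda>i. a * x i) \<ominus>\<^bsub>M\<^esub> a \<odot>\<^bsub>M\<^esub> g x \<in> B'"
  using roof unfolding almost_roof_def by auto

lemma g_zero: "g (\<lambda>_. 0) \<in> B'"
proof -
  have "g (\<lambda>_. 0) \<ominus>\<^bsub>M\<^esub> 0 \<odot>\<^bsub>M\<^esub> g (\<lambda>_. 0) \<in> B'"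
    using g_scale[OF _ A'_zero, of 0] by simp
  moreover have "0 \<odot>\<^bsub>M\<^esub> g (\<lambda>_. 0) = \<zero>\<^bsub>M\<^esub>"
    using smult_l_null[OF g_closed[OF A'_zero]] by simp
  ultimately show ?thesis
    using g_closed[OF A'_zero] by (simp add: a_minus_def a_inv_def)
qed

lemma roof_rep_carrier: "roof_rep M A' B' g \<kappa> y x \<Longrightarrow> x \<in> carrier (Kfree v r)"
  unfolding roof_rep_def using A'_subset by blast

lemma roof_rep_add:
  assumes "v \<kappa> \<le> 1" "y1 \<in> carrier M" "y2 \<in> carrier M"
    and "roof_rep M A' B' g \<kappa> y1 x1" "roof_rep M A' B' g \<kappa> y2 x2"
  shows "roof_rep M A' B' g \<kappa> (y1 \<oplus>\<^bsub>M\<^esub> y2) (\<lambda>i. x1 i + x2 i)"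
proof -
  have x: "x1 \<in> A'" "x2 \<in> A'" "(\<lambda>i. x1 i + x2 i) \<in> A'"
    and r: "\<kappa> \<odot>\<^bsub>M\<^esub> y1 \<ominus>\<^bsub>M\<^esub> g x1 \<in> B'" "\<kappa> \<odot>\<^bsub>M\<^esub> y2 \<ominus>\<^bsub>M\<^esub> g x2 \<in> B'"
    using assms(4,5) A'_add unfolding roof_rep_def by auto
  have ky: "\<kappa> \<odot>\<^bsub>M\<^esub> y1 \<in> carrier M" "\<kappa> \<odot>\<^bsub>M\<^esub> y2 \<in> carrier M"
    using assms(1-3) by simp_all
  note gx = g_closed[OF x(1)] g_closed[OF x(2)] g_closed[OF x(3)]
  have "(\<kappa> \<odot>\<^bsub>M\<^esub> y1 \<oplus>\<^bsub>M\<^esub> \<kappa> \<odot>\<^bsub>M\<^esub> y2) \<ominus>\<^bsub>M\<^esub> (g x1 \<oplus>\<^bsub>M\<^esub> g x2) \<in> B'"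
    using submodule_diff_add[OF B'_submodule ky(1) gx(1) ky(2) gx(2) r] .
  moreover have "(g x1 \<oplus>\<^bsub>M\<^esub> g x2) \<ominus>\<^bsub>M\<^esub> g (\<lambda>i. x1 i + x2 i) \<in> B'"
    using submodule_diff_sym[OF B'_submodule gx(3) _ g_add[OF x(1,2)]] gx by blast
  ultimately have "(\<kappa> \<odot>\<^bsub>M\<^esub> y1 \<oplus>\<^bsub>M\<^esub> \<kappa> \<odot>\<^bsub>M\<^esub> y2) \<ominus>\<^bsub>M\<^esub> g (\<lambda>i. x1 i + x2 i) \<in> B'"
    using submodule_diff_trans[OF B'_submodule _ _ gx(3)] ky gx by blast
  then show ?thesis
    using x(3) assms(1-3) smult_r_distr[of \<kappa> y1 y2] unfolding roof_rep_def by simp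
qed

lemma roof_rep_scale:
  assumes "v \<kappa> \<le> 1" "v a \<le> 1" "y \<in> carrier M" "roof_rep M A' B' g \<kappa> y x"
  shows "roof_rep M A' B' g \<kappa> (a \<odot>\<^bsub>M\<^esub> y) (\<lambda>i. a * x i)"
proof -
  have x: "x \<in> A'" "(\<lambda>i. a * x i) \<in> A'" and rep: "\<kappa> \<odot>\<^bsub>M\<^esub> y \<ominus>\<^bsub>M\<^esub> g x \<in> B'"
    using assms(2,4) A'_scale unfolding roof_rep_def by auto
  have ky: "\<kappa> \<odot>\<^bsub>M\<^esub> y \<in> carrier M" "a \<odot>\<^bsub>M\<^esub> (\<kappa> \<odot>\<^bsub>M\<^esub> y) \<in> carrier M"
    using assms(1-3) by simp_all
  note gx = g_closed[OF x(1)] g_closed[OF x(2)]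
  have agx: "a \<odot>\<^bsub>M\<^esub> g x \<in> carrier M"
    using assms(2) gx by simp
  have "a \<odot>\<^bsub>M\<^esub> (\<kappa> \<odot>\<^bsub>M\<^esub> y) \<ominus>\<^bsub>M\<^esub> a \<odot>\<^bsub>M\<^esub> g x \<in> B'"
    using submodule_diff_smult[OF B'_submodule _ ky(1) gx(1) rep] assms(2) by simp
  moreover have "a \<odot>\<^bsub>M\<^esub> g x \<ominus>\<^bsub>M\<^esub> g (\<lambda>i. a * x i) \<in> B'"
    using submodule_diff_sym[OF B'_submodule gx(2) agx g_scale[OF assms(2) x(1)]] .
  ultimately have "a \<odot>\<^bsub>M\<^esub> (\<kappa> \<odot>\<^bsub>M\<^esub> y) \<ominus>\<^bsub>M\<^esub> g (\<lambda>i. a * x i) \<in> B'"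
    using submodule_diff_trans[OF B'_submodule ky(2) agx gx(2)] by blast
  moreover have "a \<odot>\<^bsub>M\<^esub> (\<kappa> \<odot>\<^bsub>M\<^esub> y) = \<kappa> \<odot>\<^bsub>M\<^esub> (a \<odot>\<^bsub>M\<^esub> y)"
    using smult_assoc1[of a \<kappa> y] smult_assoc1[of \<kappa> a y] assms(1-3) by (simp add: mult.commute)
  ultimately show ?thesis
    using x(2) unfolding roof_rep_def by simp
qed

lemma roof_rep_zero_iff:
  assumes "v \<kappa> \<le> 1" "y \<in> carrier M"
  shows "roof_rep M A' B' g \<kappa> y (\<lambda>_. 0) \<longleftrightarrow> \<kappa> \<odot>\<^bsub>M\<^esub> y \<in> B'"
  using submodule_of_diff[OF B'_submodule _ g_closed[OF A'_zero] _ g_zero]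
    submodule_diff_closed[OF B'_submodule _ g_zero] assms A'_zero
  unfolding roof_rep_def by auto

lemma roof_rep_of_zero:
  assumes "v \<kappa> \<le> 1" "roof_rep M A' B' g \<kappa> \<zero>\<^bsub>M\<^esub> x"
  shows "g x \<in> B'"
proof -
  have "x \<in> A'" "\<zero>\<^bsub>M\<^esub> \<ominus>\<^bsub>M\<^esub> g x \<in> B'"
    using assms unfolding roof_rep_def by auto
  then have "g x \<ominus>\<^bsub>M\<^esub> \<zero>\<^bsub>M\<^esub> \<in> B'"
    using submodule_diff_sym[OF B'_submodule] g_closed by blast
  then show ?thesis
    using submodule_of_diff[OF B'_submodule] submodule_zero_closed[OF B'_submodule] g_closed \<open>x \<in> A'\<close>
    by blast
qed

lemma roof_rep_g:
  assumes "v \<kappa> \<le> 1" "x \<in> A'"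
  shows "roof_rep M A' B' g \<kappa> (g x) (\<lambda>i. \<kappa> * x i)"
  using submodule_diff_sym[OF B'_submodule _ _ g_scale[OF assms]] g_closed A'_scale assms
  unfolding roof_rep_def by simp

end

locale Kfree_eps_roof = Kfree_roof +
  fixes \<epsilon> :: "'k::field"
  assumes eps_less_1: "v \<epsilon> < 1"
    and injective: "\<And>x. x \<in> A' \<Longrightarrow> g x \<in> B' \<Longrightarrow> x = (\<lambda>_. 0)"
    and surjective: "\<And>d y. v d < 1 \<Longrightarrow> y \<in> carrier M \<Longrightarrow> \<exists>x. roof_rep M A' B' g (d * \<epsilon>) y x"
begin

lemma roof_rep_unique:
  assumes "v \<kappa> \<le> 1" "y \<in> carrier M" "roof_rep M A' B' g \<kappa> y x1" "roof_rep M A' B' g \<kappa> y x2"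
  shows "x1 = x2"
proof -
  have neg: "roof_rep M A' B' g \<kappa> ((- 1) \<odot>\<^bsub>M\<^esub> y) (\<lambda>i. - 1 * x2 i)"
    using roof_rep_scale[OF assms(1) _ assms(2,4), of "- 1"] by simp
  have "(- 1) \<odot>\<^bsub>M\<^esub> y \<in> carrier M"
    using smult_closed[of "- 1" y] assms(2) by simp
  then have "roof_rep M A' B' g \<kappa> (y \<oplus>\<^bsub>M\<^esub> (- 1) \<odot>\<^bsub>M\<^esub> y) (\<lambda>i. x1 i - x2 i)"
    using roof_rep_add[OF assms(1,2) _ assms(3) neg] by simp
  then have "g (\<lambda>i. x1 i - x2 i) \<in> B'"
    using roof_rep_of_zero[OF assms(1)] add_smult_minus_one[OF assms(2)] by simp
  then have "(\<lambda>i. x1 i - x2 i) = (\<lambda>_. 0)"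
    using injective \<open>roof_rep M A' B' g \<kappa> (y \<oplus>\<^bsub>M\<^esub> (- 1) \<odot>\<^bsub>M\<^esub> y) (\<lambda>i. x1 i - x2 i)\<close>
    unfolding roof_rep_def by blast
  then show ?thesis
    by (simp add: fun_eq_iff)
qed

lemma torsion_in_B':
  assumes \<kappa>: "\<kappa> \<noteq> 0" "v \<kappa> \<le> 1" and z: "z \<in> carrier M"
    and torsion: "\<And>d. v d < 1 \<Longrightarrow> d \<odot>\<^bsub>M\<^esub> (\<kappa> \<odot>\<^bsub>M\<^esub> z) = \<zero>\<^bsub>M\<^esub>" and d: "v d < 1"
  shows "(d * \<epsilon>) \<odot>\<^bsub>M\<^esub> z \<in> B'"
proof -
  have d\<epsilon>: "v (d * \<epsilon>) < 1"
    using v_mult_less_1[OF d less_imp_le[OF eps_less_1]] by simp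
  have \<kappa>z: "\<kappa> \<odot>\<^bsub>M\<^esub> z \<in> carrier M"
    using \<kappa>(2) z by simp
  obtain x where x: "roof_rep M A' B' g (d * \<epsilon>) z x"
    using surjective[OF d z] by blast
  have "roof_rep M A' B' g (d * \<epsilon>) (\<kappa> \<odot>\<^bsub>M\<^esub> z) (\<lambda>i. \<kappa> * x i)"
    using roof_rep_scale[OF less_imp_le[OF d\<epsilon>] \<kappa>(2) z x] .
  moreover have "roof_rep M A' B' g (d * \<epsilon>) (\<kappa> \<odot>\<^bsub>M\<^esub> z) (\<lambda>_. 0)"
    unfolding roof_rep_zero_iff[OF less_imp_le[OF d\<epsilon>] \<kappa>z] torsion[OF d\<epsilon>]
    by (rule submodule_zero_closed[OF B'_submodule])
  ultimately have "(\<lambda>i. \<kappa> * x i) = (\<lambda>_. 0)"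
    by (rule roof_rep_unique[OF less_imp_le[OF d\<epsilon>] \<kappa>z])
  then have "x = (\<lambda>_. 0)"
    using \<kappa>(1) by (simp add: fun_eq_iff)
  then show ?thesis
    using x unfolding roof_rep_zero_iff[OF less_imp_le[OF d\<epsilon>] z, symmetric] by simp
qed

text \<open>Meaningful for \<open>\<kappa> = d \<epsilon>\<close> with \<open>|d| < 1\<close>, where the representative exists and is
  unique; otherwise \<open>THE\<close> yields an unspecified value.\<close>
definition roof_inverse where
  "roof_inverse \<kappa> y = (THE x. roof_rep M A' B' g \<kappa> y x)"

lemma v_scaled_eps_le_1: "v d < 1 \<Longrightarrow> v (d * \<epsilon>) \<le> 1"
  using v_mult_less_1[of d \<epsilon>] eps_less_1 by simp

lemma roof_inverse_rep:
  assumes d: "v d < 1" and y: "y \<in> carrier M"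
  shows "roof_rep M A' B' g (d * \<epsilon>) y (roof_inverse (d * \<epsilon>) y)"
proof -
  have "\<exists>!x. roof_rep M A' B' g (d * \<epsilon>) y x"
    using surjective[OF d y] roof_rep_unique[OF v_scaled_eps_le_1[OF d] y] by blast
  then show ?thesis
    unfolding roof_inverse_def by (rule theI')
qed

lemma roof_inverse_unique:
  "v d < 1 \<Longrightarrow> y \<in> carrier M \<Longrightarrow> roof_rep M A' B' g (d * \<epsilon>) y x \<Longrightarrow> roof_inverse (d * \<epsilon>) y = x"
  using roof_inverse_rep roof_rep_unique[OF v_scaled_eps_le_1] by blast

lemma roof_inverse_in_Kfree: "v d < 1 \<Longrightarrow> y \<in> carrier M \<Longrightarrow> roof_inverse (d * \<epsilon>) y \<in> carrier (Kfree v r)"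
  using roof_inverse_rep roof_rep_carrier by blast

lemma roof_inverse_add:
  assumes d: "v d < 1" and y: "y1 \<in> carrier M" "y2 \<in> carrier M"
  shows "roof_inverse (d * \<epsilon>) (y1 \<oplus>\<^bsub>M\<^esub> y2) = (\<lambda>i. roof_inverse (d * \<epsilon>) y1 i + roof_inverse (d * \<epsilon>) y2 i)"
  using roof_inverse_unique[OF d _ roof_rep_add[OF v_scaled_eps_le_1[OF d] y roof_inverse_rep[OF d y(1)]
      roof_inverse_rep[OF d y(2)]]] y by simp

lemma roof_inverse_scale:
  assumes d: "v d < 1" and a: "v a \<le> 1" and y: "y \<in> carrier M"
  shows "roof_inverse (d * \<epsilon>) (a \<odot>\<^bsub>M\<^esub> y) = (\<lambda>i. a * roof_inverse (d * \<epsilon>) y i)"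
  using roof_inverse_unique[OF d _ roof_rep_scale[OF v_scaled_eps_le_1[OF d] a y roof_inverse_rep[OF d y]]] a y
  by simp

lemma roof_inverse_eq_0:
  assumes d: "v d < 1" and y: "y \<in> carrier M" and "roof_inverse (d * \<epsilon>) y = (\<lambda>_. 0)"
  shows "(d * \<epsilon>) \<odot>\<^bsub>M\<^esub> y \<in> B'"
  using roof_inverse_rep[OF d y] roof_rep_zero_iff[OF v_scaled_eps_le_1[OF d] y] assms(3) by simp

lemma roof_inverse_image_Klattice:
  assumes d: "v d < 1" "d * \<epsilon> \<noteq> 0"
  shows "Klattice v r (roof_inverse (d * \<epsilon>) ` carrier M)"
  unfolding Klattice_def
proof (intro conjI ballI allI impI)
  let ?L = "roof_inverse (d * \<epsilon>) ` carrier M"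
  show "?L \<subseteq> carrier (Kfree v r)"
    unfolding image_subset_iff using roof_inverse_in_Kfree[OF d(1)] by simp
  show "(\<lambda>i. x i + y i) \<in> ?L" if xy: "x \<in> ?L" "y \<in> ?L" for x y
  proof -
    obtain y1 where y1: "x = roof_inverse (d * \<epsilon>) y1" "y1 \<in> carrier M"
      using xy(1) by (rule imageE)
    obtain y2 where y2: "y = roof_inverse (d * \<epsilon>) y2" "y2 \<in> carrier M"
      using xy(2) by (rule imageE)
    have "(\<lambda>i. x i + y i) = roof_inverse (d * \<epsilon>) (y1 \<oplus>\<^bsub>M\<^esub> y2)"
      using roof_inverse_add[OF d(1) y1(2) y2(2)] y1(1) y2(1) by simp
    then show ?thesis
      using y1(2) y2(2) by simp
  qed
  show "(\<lambda>i. a * x i) \<in> ?L" if x: "x \<in> ?L" and a: "v a \<le> 1" for a x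
  proof -
    obtain y where y: "x = roof_inverse (d * \<epsilon>) y" "y \<in> carrier M"
      using x by (rule imageE)
    have "(\<lambda>i. a * x i) = roof_inverse (d * \<epsilon>) (a \<odot>\<^bsub>M\<^esub> y)"
      using roof_inverse_scale[OF d(1) a y(2)] y(1) by simp
    then show ?thesis
      using y(2) a by simp
  qed
  have "(\<lambda>i. (d * \<epsilon> * d) * x i) \<in> ?L" if x: "x \<in> carrier (Kfree v r)" for x
  proof -
    have dx: "(\<lambda>i. d * x i) \<in> A'"
      using Kmax_scale_in_A'[OF d(1) x] .
    have "(\<lambda>i. (d * \<epsilon> * d) * x i) = roof_inverse (d * \<epsilon>) (g (\<lambda>i. d * x i))"
      using roof_inverse_unique[OF d(1) g_closed[OF dx] roof_rep_g[OF v_scaled_eps_le_1[OF d(1)] dx]]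
      by (simp add: mult.assoc)
    then show ?thesis
      using g_closed[OF dx] by simp
  qed
  then show "\<exists>c. c \<noteq> 0 \<and> (\<forall>x\<in>carrier (Kfree v r). (\<lambda>i. c * x i) \<in> ?L)"
    using d(2) by (intro exI[of _ "d * \<epsilon> * d"]) simp
qed
end

section \<open>Almost isomorphisms from almost bases\<close>

definition almost_injective_hom ::
  "('k::field \<Rightarrow> real) \<Rightarrow> ('k, 'm, 'c) module_scheme \<Rightarrow> ('m \<Rightarrow> nat \<Rightarrow> 'k) \<Rightarrow> bool" where
  "almost_injective_hom v M \<psi> \<longleftrightarrow>
     (\<forall>y1\<in>carrier M. \<forall>y2\<in>carrier M. \<psi> (y1 \<oplus>\<^bsub>M\<^esub> y2) = (\<lambda>i. \<psi> y1 i + \<psi> y2 i)) \<and>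
     (\<forall>a. \<forall>y\<in>carrier M. v a \<le> 1 \<longrightarrow> \<psi> (a \<odot>\<^bsub>M\<^esub> y) = (\<lambda>i. a * \<psi> y i)) \<and>
     almost_zero_sq v M {y\<in>carrier M. \<psi> y = (\<lambda>_. 0)} {\<zero>\<^bsub>M\<^esub>}"

definition Kfree_max :: "('k::field \<Rightarrow> real) \<Rightarrow> nat \<Rightarrow> (nat \<Rightarrow> 'k) set" where
  "Kfree_max v r = {x\<in>carrier (Kfree v r). \<forall>i. v (x i) < 1}"

context valued_module
begin

lemma Kfree_max_submodule: "submodule (Kfree_max v r) (Kint v) (Kfree v r)"
proof (rule module.submoduleI[OF Kfree_module])
  show "\<ominus>\<^bsub>Kfree v r\<^esub> x \<in> Kfree_max v r" if "x \<in> Kfree_max v r" for x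
    using that Kfree_minus[of x r] unfolding Kfree_max_def by simp
  show "x \<oplus>\<^bsub>Kfree v r\<^esub> y \<in> Kfree_max v r" if "x \<in> Kfree_max v r" "y \<in> Kfree_max v r" for x y
    using that v_add_less_1 unfolding Kfree_max_def by (simp add: less_imp_le)
  show "a \<odot>\<^bsub>Kfree v r\<^esub> x \<in> Kfree_max v r" if "a \<in> carrier (Kint v)" "x \<in> Kfree_max v r" for a x
    using that v_mult_less_1[of "x _" a] unfolding Kfree_max_def by (simp add: mult.commute less_imp_le)
qed (auto simp: Kfree_max_def)

lemma Kfree_max_almost_all: "almost_zero_sq v (Kfree v r) (carrier (Kfree v r)) (Kfree_max v r)"
  unfolding almost_zero_sq_def Kfree_max_def Kmax_def using v_mult_less_1 by (simp add: less_imp_le)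

context
  fixes \<psi> :: "'m \<Rightarrow> nat \<Rightarrow> 'k"
  assumes \<psi>: "almost_injective_hom v M \<psi>"
begin

lemma almost_injective_hom_add:
  "y1 \<in> carrier M \<Longrightarrow> y2 \<in> carrier M \<Longrightarrow> \<psi> (y1 \<oplus>\<^bsub>M\<^esub> y2) = (\<lambda>i. \<psi> y1 i + \<psi> y2 i)"
  using \<psi> unfolding almost_injective_hom_def by blast

lemma almost_injective_hom_scale: "v a \<le> 1 \<Longrightarrow> y \<in> carrier M \<Longrightarrow> \<psi> (a \<odot>\<^bsub>M\<^esub> y) = (\<lambda>i. a * \<psi> y i)"
  using \<psi> unfolding almost_injective_hom_def by blast

lemma almost_injective_hom_diff:
  assumes "y1 \<in> carrier M" "y2 \<in> carrier M"
  shows "\<psi> (y1 \<ominus>\<^bsub>M\<^esub> y2) = (\<lambda>i. \<psi> y1 i - \<psi> y2 i)"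
proof -
  have "\<ominus>\<^bsub>M\<^esub> y2 = (- 1) \<odot>\<^bsub>M\<^esub> y2"
    using add_smult_minus_one[OF assms(2)] assms(2) smult_closed[of "- 1" y2]
    by (simp add: M.minus_equality M.add.m_comm)
  then show ?thesis
    using almost_injective_hom_add[OF assms(1), of "\<ominus>\<^bsub>M\<^esub> y2"]
      almost_injective_hom_scale[OF _ assms(2), of "- 1"] assms
    unfolding a_minus_def by simp
qed

lemma almost_injective_hom_kernel_submodule: "submodule {y\<in>carrier M. \<psi> y = (\<lambda>_. 0)} (Kint v) M"
proof (rule submoduleI)
  have "\<psi> (0 \<odot>\<^bsub>M\<^esub> \<zero>\<^bsub>M\<^esub>) = (\<lambda>_. 0)"
    using almost_injective_hom_scale[of 0 "\<zero>\<^bsub>M\<^esub>"] by simp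
  then show "\<zero>\<^bsub>M\<^esub> \<in> {y\<in>carrier M. \<psi> y = (\<lambda>_. 0)}"
    using smult_l_null[of "\<zero>\<^bsub>M\<^esub>"] by simp
  show "\<ominus>\<^bsub>M\<^esub> y \<in> {y\<in>carrier M. \<psi> y = (\<lambda>_. 0)}" if "y \<in> {y\<in>carrier M. \<psi> y = (\<lambda>_. 0)}" for y
    using that almost_injective_hom_diff[of "\<zero>\<^bsub>M\<^esub>" y] \<open>\<zero>\<^bsub>M\<^esub> \<in> {y\<in>carrier M. \<psi> y = (\<lambda>_. 0)}\<close>
    by (simp add: a_minus_def)
qed (auto simp: almost_injective_hom_add almost_injective_hom_scale)

lemma almost_injective_hom_kernel_almost_zero:
  "almost_zero_sq v M {y\<in>carrier M. \<psi> y = (\<lambda>_. 0)} {\<zero>\<^bsub>M\<^esub>}"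
  using \<psi> unfolding almost_injective_hom_def by blast

text \<open>A map \<open>g\<close> with \<open>\<psi> \<circ> g = lincomb e r\<close> on \<open>(K\<^sup>\<circ>\<^sup>\<circ>)\<^sup>r\<close> represents the almost
  inverse of \<open>\<psi>\<close>.\<close>
context
  fixes r e and g :: "(nat \<Rightarrow> 'k) \<Rightarrow> 'm"
  assumes g: "\<And>x. x \<in> Kfree_max v r \<Longrightarrow> g x \<in> carrier M \<and> \<psi> (g x) = lincomb e r x"
begin

lemma diff_in_kernel:
  "y1 \<in> carrier M \<Longrightarrow> y2 \<in> carrier M \<Longrightarrow> \<psi> y1 = \<psi> y2 \<Longrightarrow> y1 \<ominus>\<^bsub>M\<^esub> y2 \<in> {y\<in>carrier M. \<psi> y = (\<lambda>_. 0)}"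
  using almost_injective_hom_diff by simp

lemma section_roof: "almost_roof v (Kfree v r) M (Kfree_max v r) {y\<in>carrier M. \<psi> y = (\<lambda>_. 0)} g"
  unfolding almost_roof_def
proof (intro conjI ballI)
  show "g \<in> Kfree_max v r \<rightarrow> carrier M"
    using g by blast
  show "g (x \<oplus>\<^bsub>Kfree v r\<^esub> y) \<ominus>\<^bsub>M\<^esub> (g x \<oplus>\<^bsub>M\<^esub> g y) \<in> {y\<in>carrier M. \<psi> y = (\<lambda>_. 0)}"
    if x: "x \<in> Kfree_max v r" and y: "y \<in> Kfree_max v r" for x y
  proof -
    have xy: "(\<lambda>i. x i + y i) \<in> Kfree_max v r"
      using x y module.submoduleE(5)[OF Kfree_module Kfree_max_submodule] by simp
    have "\<psi> (g (\<lambda>i. x i + y i)) = \<psi> (g x \<oplus>\<^bsub>M\<^esub> g y)"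
      using g[OF xy] g[OF x] g[OF y] almost_injective_hom_add[of "g x" "g y"] by (simp add: lincomb_add)
    then show ?thesis
      using diff_in_kernel g[OF xy] g[OF x] g[OF y] by simp
  qed
  show "g (a \<odot>\<^bsub>Kfree v r\<^esub> x) \<ominus>\<^bsub>M\<^esub> a \<odot>\<^bsub>M\<^esub> g x \<in> {y\<in>carrier M. \<psi> y = (\<lambda>_. 0)}"
    if a: "a \<in> carrier (Kint v)" and x: "x \<in> Kfree_max v r" for a x
  proof -
    have ax: "(\<lambda>i. a * x i) \<in> Kfree_max v r"
      using a x module.submoduleE(4)[OF Kfree_module Kfree_max_submodule] by simp
    have "\<psi> (g (\<lambda>i. a * x i)) = \<psi> (a \<odot>\<^bsub>M\<^esub> g x)"
      using g[OF ax] g[OF x] almost_injective_hom_scale[of a "g x"] a by (simp add: lincomb_scale)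
    then show ?thesis
      using diff_in_kernel g[OF ax] g[OF x] a by simp
  qed
qed (use Kfree_max_submodule Kfree_max_almost_all almost_injective_hom_kernel_submodule
      almost_injective_hom_kernel_almost_zero in auto)

lemma section_kernel:
  assumes indep: "\<And>x. lincomb e r x = (\<lambda>_. 0) \<Longrightarrow> \<forall>i<r. x i = 0"
  shows "almost_zero_sq v (Kfree v r)
    (roof_kernel M (Kfree_max v r) {y\<in>carrier M. \<psi> y = (\<lambda>_. 0)} g) {\<zero>\<^bsub>Kfree v r\<^esub>}"
  unfolding almost_zero_sq_def
proof (intro ballI)
  fix d x assume "x \<in> roof_kernel M (Kfree_max v r) {y\<in>carrier M. \<psi> y = (\<lambda>_. 0)} g"
  then have x: "x \<in> Kfree_max v r" "\<psi> (g x) = (\<lambda>_. 0)"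
    unfolding roof_kernel_def by auto
  then have "\<forall>i<r. x i = 0"
    using indep g[OF x(1)] by simp
  moreover have "\<forall>i\<ge>r. x i = 0"
    using x(1) unfolding Kfree_max_def by simp
  ultimately have "x = (\<lambda>_. 0)"
    using not_le by blast
  then show "d \<odot>\<^bsub>Kfree v r\<^esub> x \<in> {\<zero>\<^bsub>Kfree v r\<^esub>}"
    by simp
qed

lemma section_cokernel:
  assumes span: "\<And>y. y \<in> carrier M \<Longrightarrow> \<exists>x\<in>carrier (Kfree v r). lincomb e r x = \<psi> y"
  shows "almost_zero_sq v M (carrier M) (roof_image M (Kfree_max v r) {y\<in>carrier M. \<psi> y = (\<lambda>_. 0)} g)"
  unfolding almost_zero_sq_def
proof (intro ballI)
  fix d y assume d: "d \<in> Kmax v" and y: "y \<in> carrier M"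
  then have dy: "d \<odot>\<^bsub>M\<^esub> y \<in> carrier M"
    unfolding Kmax_def by simp
  obtain x0 where x0: "x0 \<in> carrier (Kfree v r)" "lincomb e r x0 = \<psi> y"
    using span[OF y] by blast
  define x where "x = (\<lambda>i. d * x0 i)"
  have x: "x \<in> Kfree_max v r"
    using x0(1) d v_mult_less_1 unfolding x_def Kfree_max_def Kmax_def by (simp add: less_imp_le)
  have "\<psi> (d \<odot>\<^bsub>M\<^esub> y) = \<psi> (g x)"
    using g[OF x] almost_injective_hom_scale[OF _ y] d x0(2) unfolding x_def Kmax_def
    by (simp add: lincomb_scale)
  then show "d \<odot>\<^bsub>M\<^esub> y \<in> roof_image M (Kfree_max v r) {y\<in>carrier M. \<psi> y = (\<lambda>_. 0)} g"
    using diff_in_kernel[OF dy] g[OF x] dy x unfolding roof_image_def by blast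
qed

end

theorem almost_isomorphic_of_almost_basis:
  assumes e: "almost_basis v r (\<psi> ` carrier M) e"
  shows "almost_isomorphic v (Kfree v r) M"
proof -
  have "\<forall>x\<in>Kfree_max v r. \<exists>y. y \<in> carrier M \<and> \<psi> y = lincomb e r x"
    using e unfolding almost_basis_def Kfree_max_def by (metis (mono_tags, lifting) imageE mem_Collect_eq)
  then obtain g where g: "\<And>x. x \<in> Kfree_max v r \<Longrightarrow> g x \<in> carrier M \<and> \<psi> (g x) = lincomb e r x"
    by metis
  have "\<And>x. lincomb e r x = (\<lambda>_. 0) \<Longrightarrow> \<forall>i<r. x i = 0"
    and "\<And>y. y \<in> carrier M \<Longrightarrow> \<exists>x\<in>carrier (Kfree v r). lincomb e r x = \<psi> y"
    using e unfolding almost_basis_def by auto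
  then show ?thesis
    unfolding almost_isomorphic_def
    using section_roof[OF g] section_kernel[OF g] section_cokernel[OF g] by blast
qed

end

end

section \<open>Almost finite free modules\<close>

locale almost_finite_free_module = valued_module v M + full_valued v for v M +
  fixes r :: nat
  assumes aff: "almost_finite_free v M r"
begin

lemma exists_eps_roof:
  assumes \<epsilon>: "\<epsilon> \<noteq> 0" "v \<epsilon> < 1"
  obtains A' B' g where "Kfree_eps_roof v M r A' B' g \<epsilon>"
proof -
  have "finite {\<epsilon>} \<and> {\<epsilon>} \<subseteq> Kmax v"
    using \<epsilon> unfolding Kmax_def by auto
  then obtain A' B' g where roof: "almost_roof v (Kfree v r) M A' B' g"
    and ker: "almost_annihilated v (Kfree v r) (genideal (Kint v) {\<epsilon>})
      (roof_kernel M A' B' g) {\<zero>\<^bsub>Kfree v r\<^esub>}"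
    and coker: "almost_annihilated v M (genideal (Kint v) {\<epsilon>}) (carrier M) (roof_image M A' B' g)"
    using aff[unfolded almost_finite_free_def, rule_format, of "{\<epsilon>}"] by blast
  have \<epsilon>_in: "\<epsilon> \<in> genideal (Kint v) {\<epsilon>}"
    unfolding genideal_def by blast
  have \<epsilon>_Kmax: "\<epsilon> \<in> Kmax v"
    using \<epsilon>(2) unfolding Kmax_def by simp
  have "x = (\<lambda>_. 0)" if "x \<in> A'" "g x \<in> B'" for x
  proof -
    have "x \<in> roof_kernel M A' B' g"
      using that unfolding roof_kernel_def by simp
    then have "\<epsilon> \<odot>\<^bsub>Kfree v r\<^esub> (\<epsilon> \<odot>\<^bsub>Kfree v r\<^esub> x) \<in> {\<zero>\<^bsub>Kfree v r\<^esub>}"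
      using bspec[OF ker[unfolded almost_annihilated_def] \<epsilon>_in] \<epsilon>_Kmax
      unfolding almost_zero_sq_def by simp
    then show ?thesis
      using \<epsilon>(1) by (simp add: fun_eq_iff)
  qed
  moreover have "\<exists>x. roof_rep M A' B' g (d * \<epsilon>) y x" if d: "v d < 1" and y: "y \<in> carrier M" for d y
  proof -
    have "d \<in> Kmax v"
      using d unfolding Kmax_def by simp
    then have "d \<odot>\<^bsub>M\<^esub> (\<epsilon> \<odot>\<^bsub>M\<^esub> y) \<in> roof_image M A' B' g"
      using bspec[OF coker[unfolded almost_annihilated_def] \<epsilon>_in] y
      unfolding almost_zero_sq_def by simp
    moreover have "d \<odot>\<^bsub>M\<^esub> (\<epsilon> \<odot>\<^bsub>M\<^esub> y) = (d * \<epsilon>) \<odot>\<^bsub>M\<^esub> y"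
      using smult_assoc1[of d \<epsilon> y] d \<epsilon>(2) y by simp
    ultimately show ?thesis
      unfolding roof_image_def roof_rep_def by auto
  qed
  ultimately have "Kfree_eps_roof v M r A' B' g \<epsilon>"
    using roof \<epsilon>(2) by (intro Kfree_eps_roof.intro Kfree_roof.intro Kfree_roof_axioms.intro
        Kfree_eps_roof_axioms.intro valued_module_axioms) auto
  then show ?thesis
    using that by blast
qed

lemma almost_torsion_free:
  assumes \<kappa>: "\<kappa> \<noteq> 0" "v \<kappa> \<le> 1" and z: "z \<in> carrier M"
    and torsion: "\<And>d. v d < 1 \<Longrightarrow> d \<odot>\<^bsub>M\<^esub> (\<kappa> \<odot>\<^bsub>M\<^esub> z) = \<zero>\<^bsub>M\<^esub>" and d: "v d < 1"
  shows "d \<odot>\<^bsub>M\<^esub> z = \<zero>\<^bsub>M\<^esub>"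
proof (cases "d = 0")
  case True
  then show ?thesis
    using smult_l_null[OF z] by simp
next
  case False
  define q where "q = root 3 (v d)"
  have q: "0 < q" "q < 1" "q ^ 3 = v d"
    using False d unfolding q_def by (simp_all add: real_root_pow_pos)
  obtain e where e: "v e = q"
    using exists_value q(1) by blast
  then have "e \<noteq> 0" "v e < 1"
    using q by auto
  then obtain A' B' g where "Kfree_eps_roof v M r A' B' g e"
    by (rule exists_eps_roof)
  then interpret R: Kfree_eps_roof v M r A' B' g e .
  \<comment> \<open>Split \<open>d = d' e\<^sup>2\<close> with \<open>|d'| = |e| = |d|\<^bsup>1/3\<^esup> < 1\<close>.\<close>
  define d' where "d' = d / (e * e)"
  have "v d' = q"
    unfolding d'_def using e q by (simp add: power3_eq_cube field_simps)
  have "(e * e) \<odot>\<^bsub>M\<^esub> z \<in> B'"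
    using R.torsion_in_B'[OF \<kappa> z torsion \<open>v e < 1\<close>] .
  then have "d' \<odot>\<^bsub>M\<^esub> ((e * e) \<odot>\<^bsub>M\<^esub> z) = \<zero>\<^bsub>M\<^esub>"
    using R.B'_killed \<open>v d' = q\<close> q(2) by simp
  moreover have "d' \<odot>\<^bsub>M\<^esub> ((e * e) \<odot>\<^bsub>M\<^esub> z) = (d' * (e * e)) \<odot>\<^bsub>M\<^esub> z"
    using smult_assoc1[of d' "e * e" z] \<open>v d' = q\<close> e q z by (simp add: mult_le_one)
  moreover have "d' * (e * e) = d"
    unfolding d'_def using \<open>e \<noteq> 0\<close> by simp
  ultimately show ?thesis
    by simp
qed

lemma exists_almost_injective_hom:
  obtains \<psi> where "almost_injective_hom v M \<psi>" "Klattice v r (\<psi> ` carrier M)"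
proof -
  obtain \<epsilon> where "v \<epsilon> = 1 / 2"
    using exists_value[of "1 / 2"] by auto
  then have \<epsilon>: "\<epsilon> \<noteq> 0" "v \<epsilon> < 1"
    by auto
  then obtain A' B' g where "Kfree_eps_roof v M r A' B' g \<epsilon>"
    by (rule exists_eps_roof)
  then interpret R: Kfree_eps_roof v M r A' B' g \<epsilon> .
  let ?\<psi> = "R.roof_inverse (\<epsilon> * \<epsilon>)"
  have "\<forall>d. v d < 1 \<longrightarrow> d \<odot>\<^bsub>M\<^esub> y = \<zero>\<^bsub>M\<^esub>" if y: "y \<in> carrier M" "?\<psi> y = (\<lambda>_. 0)" for y
  proof (intro allI impI)
    fix d assume "v d < 1"
    have "(\<epsilon> * \<epsilon>) \<odot>\<^bsub>M\<^esub> y \<in> B'"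
      using R.roof_inverse_eq_0[OF \<epsilon>(2) y] .
    then have "d' \<odot>\<^bsub>M\<^esub> ((\<epsilon> * \<epsilon>) \<odot>\<^bsub>M\<^esub> y) = \<zero>\<^bsub>M\<^esub>" if "v d' < 1" for d'
      using R.B'_killed[OF that] by blast
    moreover have "\<epsilon> * \<epsilon> \<noteq> 0" "v (\<epsilon> * \<epsilon>) \<le> 1"
      using \<epsilon> mult_le_one[of "v \<epsilon>" "v \<epsilon>"] by auto
    ultimately show "d \<odot>\<^bsub>M\<^esub> y = \<zero>\<^bsub>M\<^esub>"
      using almost_torsion_free[OF _ _ y(1) _ \<open>v d < 1\<close>] by blast
  qed
  then have "almost_injective_hom v M ?\<psi>"
    unfolding almost_injective_hom_def almost_zero_sq_def Kmax_def
    using R.roof_inverse_add[OF \<epsilon>(2)] R.roof_inverse_scale[OF \<epsilon>(2)] by simp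
  moreover have "Klattice v r (?\<psi> ` carrier M)"
    using R.roof_inverse_image_Klattice \<epsilon> by simp
  ultimately show ?thesis
    using that by blast
qed

end

theorem theorem5p3:
  fixes v :: "'k::field \<Rightarrow> real" and M :: "('k, 'm) module"
  assumes "nonarch_field v"
    and "spherically_complete v"
    and "value_group v = {0<..}"
    and "module (Kint v) M"
    and "almost_finite_free v M r"
  shows "\<exists>n. almost_isomorphic v (Kfree v n) M"
proof -
  have "nonarch_valued v"
    using assms(1) unfolding nonarch_field_def by (intro nonarch_valued.intro) blast
  then have "full_valued v"
    using assms(3) by (intro full_valued.intro full_valued_axioms.intro)
  interpret sph_valued v
    using \<open>full_valued v\<close> assms(2) by (intro sph_valued.intro sph_valued_axioms.intro)
  interpret almost_finite_free_module v M r
    using \<open>nonarch_valued v\<close> \<open>full_valued v\<close> assms(4,5)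
    by (intro almost_finite_free_module.intro valued_module.intro almost_finite_free_module_axioms.intro)
  obtain \<psi> where \<psi>: "almost_injective_hom v M \<psi>" "Klattice v r (\<psi> ` carrier M)"
    by (rule exists_almost_injective_hom)
  obtain e where "almost_basis v r (\<psi> ` carrier M) e"
    using Klattice_almost_basis[OF \<psi>(2)] by blast
  then show ?thesis
    using almost_isomorphic_of_almost_basis[OF \<psi>(1)] by blast
qed

end
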